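(* Let $T=(V,L)$ be a substrate tree, $\mathcal{J}=\langle N,B\rangle$ a request, and $N'\in\{1,\dots,N\}$ an integer. Let $\mathcal{C}$ be a VCE of the augmented request $\mathcal{J}'=\langle N+N',B\rangle$ in $T$ such that $\mathcal{C}(h)\le N'$ for every PM $h\in H$. Then $(\mathcal{C}_s,\mathcal{B}_s)$ with $\mathcal{C}_s=\mathcal{C}$ and $\mathcal{B}_s(l_v)=\min\{n_v,N+N'-n_v\}\cdot B$ (where $n_v=\sum_{h\in H\cap T_v}\mathcal{C}(h)$) is a feasible SVCE of $\mathcal{J}$.
   Context: Substrate: an undirected tree $T=(V,L)$ with $V=H\cup S$, where $H$ (the physical machines, PMs) are exactly the leaves and $S$ (switches) are the internal nodes, rooted at some $r\in S$. For $v\in V$, $T_v$ is the subtree rooted at $v$ and $l_v$ is the link from $v$ to its parent. Each PM $h$ has $c_h\in\mathbb{Z}_{\ge0}$ available VM slots and each non-root node $v$ has available bandwidth $b_v\ge0$ on $l_v$. A request is $\langle M,B\rangle$ with $M$ a positive integer and $B\ge0$. VCE: given a tree with PM capacities $c_h$ and link bandwidths $b_v$, a virtual cluster embedding of $\langle M,B\rangle$ is a function $\mathcal{C}:H\to\mathbb{Z}_{\ge0}$ with $\mathcal{C}(h)\le c_h$ for all $h$, $\sum_{h\in H}\mathcal{C}(h)=M$, and $\min\{n_v,M-n_v\}\cdot B\le b_v$ for every link $l_v$, where $n_v=\sum_{h\in H\cap T_v}\mathcal{C}(h)$. SVCE of $\mathcal{J}=\langle N,B\rangle$: a pair $(\mathcal{C}_s,\mathcal{B}_s)$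 with $\mathcal{C}_s:H\to\mathbb{Z}_{\ge0}$, $\mathcal{C}_s(h)\le c_h$, and $\mathcal{B}_s:L\to\mathbb{R}_{\ge0}$, $\mathcal{B}_s(l_v)\le b_v$, such that for every PM $F\in H$ there exists a VCE of $\langle N,B\rangle$ in the tree $(V\setminus\{F\},L\setminus\{l_F\})$ whose PM capacities are $\mathcal{C}_s(h)$ ($h\neq F$) and whose link bandwidths are $\mathcal{B}_s(l_v)$. *)

theory Defs
  imports Complex_Main
begin

text \<open>A rooted tree on a finite node set V with root r, given by a parent function p.
  Normalisation: p r = r; every node reaches the root by iterating p.
  The link l_v of a non-root node v is identified with v itself.\<close>

definition children :: "'a set \<Rightarrow> 'a \<Rightarrow> ('a \<Rightarrow> 'a) \<Rightarrow> 'a \<Rightarrow> 'a set" where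
  "children V r p v = {u \<in> V - {r}. p u = v}"

definition substrate_tree :: "'a set \<Rightarrow> 'a \<Rightarrow> ('a \<Rightarrow> 'a) \<Rightarrow> bool" where
  "substrate_tree V r p \<longleftrightarrow> finite V \<and> r \<in> V \<and> p r = r \<and>
     (\<forall>v \<in> V - {r}. p v \<in> V) \<and> (\<forall>v \<in> V. \<exists>k. (p ^^ k) v = r) \<and>
     children V r p r \<noteq> {}"

definition pms :: "'a set \<Rightarrow> 'a \<Rightarrow> ('a \<Rightarrow> 'a) \<Rightarrow> 'a set" where
  "pms V r p = {v \<in> V. children V r p v = {}}"

definition subtree :: "'a set \<Rightarrow> ('a \<Rightarrow> 'a) \<Rightarrow> 'a \<Rightarrow> 'a set" where
  "subtree V p v = {u \<in> V. \<exists>k. (p ^^ k) u = v}"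

definition load :: "'a set \<Rightarrow> ('a \<Rightarrow> 'a) \<Rightarrow> 'a set \<Rightarrow> ('a \<Rightarrow> nat) \<Rightarrow> 'a \<Rightarrow> nat" where
  "load V p H C v = (\<Sum>h \<in> H \<inter> subtree V p v. C h)"

definition vce :: "'a set \<Rightarrow> 'a \<Rightarrow> ('a \<Rightarrow> 'a) \<Rightarrow> 'a set \<Rightarrow> ('a \<Rightarrow> nat) \<Rightarrow> ('a \<Rightarrow> real)
    \<Rightarrow> nat \<Rightarrow> real \<Rightarrow> ('a \<Rightarrow> nat) \<Rightarrow> bool" where
  "vce V r p H c b M B C \<longleftrightarrow>
     (\<forall>h \<in> H. C h \<le> c h) \<and> (\<Sum>h \<in> H. C h) = M \<and>
     (\<forall>v \<in> V - {r}. real (min (load V p H C v) (M - load V p H C v)) * B \<le> b v)"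

definition svce :: "'a set \<Rightarrow> 'a \<Rightarrow> ('a \<Rightarrow> 'a) \<Rightarrow> ('a \<Rightarrow> nat) \<Rightarrow> ('a \<Rightarrow> real)
    \<Rightarrow> nat \<Rightarrow> real \<Rightarrow> ('a \<Rightarrow> nat) \<Rightarrow> ('a \<Rightarrow> real) \<Rightarrow> bool" where
  "svce V r p c b N B Cs Bs \<longleftrightarrow>
     (\<forall>h \<in> pms V r p. Cs h \<le> c h) \<and>
     (\<forall>v \<in> V - {r}. 0 \<le> Bs v \<and> Bs v \<le> b v) \<and>
     (\<forall>F \<in> pms V r p. \<exists>C'. vce (V - {F}) r p (pms V r p - {F}) Cs Bs N B C')"

end

theory Submission
  imports Defs
begin

text \<open>Survivability comes from thinning the augmented embedding: removing VMs from it never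
  increases the number of VMs on either side of a link, so the traffic it demands on every link
  stays within the bandwidth reserved by the augmented embedding. If a PM F fails, the at least
  N VMs placed outside F (each PM hosts at most N' of the N + N' VMs) can be thinned to exactly
  N, which gives an embedding of the original request avoiding F.\<close>

lemma exists_le_sum_eq:
  fixes f :: "'a \<Rightarrow> nat"
  assumes "finite A" "n \<le> sum f A"
  shows "\<exists>g. (\<forall>x. g x \<le> f x) \<and> sum g A = n"
  using assms
proof (induction A arbitrary: n rule: finite_induct)
  case empty
  then show ?case by (intro exI[of _ "\<lambda>_. 0"]) auto
next
  case (insert a A)
  show ?case
  proof (cases "n \<le> sum f A")
    case True
    then obtain g where g: "\<forall>x. g x \<le> f x" "sum g A = n" using insert by blast
    have "sum (g(a := 0)) A = sum g A" using insert(2) by (intro sum.cong) auto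
    then show ?thesis using g insert(1,2) by (intro exI[of _ "g(a := 0)"]) auto
  next
    case False
    have "sum (f(a := n - sum f A)) A = sum f A" using insert(2) by (intro sum.cong) auto
    then show ?thesis using False insert(1,2,4)
      by (intro exI[of _ "f(a := n - sum f A)"]) auto
  qed
qed

lemma min_cut_le_of_dominated:
  fixes g C :: "'a \<Rightarrow> nat"
  assumes "finite H" "S \<subseteq> H" "\<forall>x. g x \<le> C x"
  shows "min (sum g S) (sum g H - sum g S) \<le> min (sum C S) (sum C H - sum C S)"
proof -
  have "sum g H - sum g S = sum g (H - S)" "sum C H - sum C S = sum C (H - S)"
    using assms(1,2) by (simp_all add: sum_diff_nat finite_subset)
  moreover have "sum g S \<le> sum C S" "sum g (H - S) \<le> sum C (H - S)"
    using assms(3) by (simp_all add: sum_mono)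
  ultimately show ?thesis by linarith
qed

lemma vce_of_dominated:
  fixes g C :: "'a \<Rightarrow> nat"
  assumes "finite H" "B \<ge> 0" "\<forall>x. g x \<le> C x" "sum g H = N" "sum C H = M"
  shows "vce V r p H C (\<lambda>v. real (min (load V p H C v) (M - load V p H C v)) * B) N B g"
  unfolding vce_def
proof (intro conjI ballI)
  fix v
  have "min (load V p H g v) (N - load V p H g v) \<le> min (load V p H C v) (M - load V p H C v)"
    using min_cut_le_of_dominated[OF assms(1) _ assms(3), of "H \<inter> subtree V p v"] assms(4,5)
    unfolding load_def by auto
  then show "real (min (load V p H g v) (N - load V p H g v)) * B
      \<le> real (min (load V p H C v) (M - load V p H C v)) * B"
    using assms(2) by (intro mult_right_mono) auto
qed (use assms in auto)

lemma load_remove_idle_pm: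
  assumes "finite H" "g F = 0"
  shows "load (V - {F}) p (H - {F}) g v = load V p H g v"
proof -
  have "(H - {F}) \<inter> subtree (V - {F}) p v = (H \<inter> subtree V p v) - {F}"
    unfolding subtree_def by auto
  then show ?thesis
    unfolding load_def using assms by (simp add: sum_diff1_nat)
qed

lemma vce_remove_idle_pm:
  assumes "finite H" "g F = 0" "vce V r p H c b N B g"
  shows "vce (V - {F}) r p (H - {F}) c b N B g"
proof -
  have "sum g (H - {F}) = sum g H" using assms(1,2) by (simp add: sum_diff1_nat)
  then show ?thesis
    using assms(3) unfolding vce_def load_remove_idle_pm[where g = g, OF assms(1,2)] by auto
qed

lemma finite_pms: "substrate_tree V r p \<Longrightarrow> finite (pms V r p)"
  unfolding substrate_tree_def pms_def by simp

theorem lemma3: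
  fixes V :: "'a set" and r :: 'a and p :: "'a \<Rightarrow> 'a"
    and c :: "'a \<Rightarrow> nat" and b :: "'a \<Rightarrow> real"
    and N N' :: nat and B :: real and C :: "'a \<Rightarrow> nat"
  assumes tree: "substrate_tree V r p"
    and b_nonneg: "\<forall>v \<in> V - {r}. 0 \<le> b v"
    and N_pos: "1 \<le> N" and B_nonneg: "0 \<le> B"
    and N'_range: "1 \<le> N'" "N' \<le> N"
    and C_vce: "vce V r p (pms V r p) c b (N + N') B C"
    and C_bound: "\<forall>h \<in> pms V r p. C h \<le> N'"
  shows "svce V r p c b N B C
           (\<lambda>v. real (min (load V p (pms V r p) C v) (N + N' - load V p (pms V r p) C v)) * B)"
proof -
  define H where "H = pms V r p"
  have fin: "finite H" using tree unfolding H_def by (rule finite_pms)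
  have sum_C: "sum C H = N + N'" using C_vce unfolding vce_def H_def by simp
  have "\<exists>g. vce (V - {F}) r p (H - {F}) C
      (\<lambda>v. real (min (load V p H C v) (N + N' - load V p H C v)) * B) N B g" if "F \<in> H" for F
  proof -
    have "sum (C(F := 0)) H = N + N' - C F"
      using that fin sum_C by (simp add: sum.remove)
    then have "N \<le> sum (C(F := 0)) H" using C_bound that unfolding H_def by auto
    then obtain g where g: "\<forall>x. g x \<le> (C(F := 0)) x" "sum g H = N"
      using exists_le_sum_eq fin by blast
    have g_F: "g F = 0" using g(1)[rule_format, of F] by simp
    have g_le: "\<forall>x. g x \<le> C x"
    proof
      show "g x \<le> C x" for x using g(1)[rule_format, of x] by (cases "x = F") auto
    qed
    have "vce V r p H C (\<lambda>v. real (min (load V p H C v) (N + N' - load V p H C v)) * B) N B g"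
      using vce_of_dominated[OF fin B_nonneg g_le g(2) sum_C] .
    then show ?thesis using vce_remove_idle_pm[where g = g, OF fin g_F] by blast
  qed
  moreover have "\<forall>h \<in> H. C h \<le> c h"
    and "\<forall>v \<in> V - {r}. real (min (load V p H C v) (N + N' - load V p H C v)) * B \<le> b v"
    using C_vce unfolding vce_def H_def by auto
  ultimately show ?thesis
    using B_nonneg unfolding svce_def H_def[symmetric] by simp
qed

end
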